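(* Let $K\subseteq L$ be differential fields, $r\in\mathbb{N}$, and suppose $K$ is not algebraically closed, the constant field $C$ of $K$ is not all of $K$, and $K$ is weakly $r$-differentially closed in $L$. Let $m\ge1$ and let $Q_1,\dots,Q_m\in K\{Y\}$ be nonzero differential polynomials of order $\le r$ having a common zero in $L$. Then $Q_1,\dots,Q_m$ have a common zero in $K$.
   Context: Differential fields have characteristic $0$. $K$ is weakly $r$-differentially closed in $L$ if every nonzero $P\in K\{Y\}$ of order $\le r$ having a zero in $L$ has a zero in $K$. *)

theory Defs
  imports Main "HOL-Library.Poly_Mapping" "HOL-Computational_Algebra.Polynomial"
begin

definition derivation :: "('a::field \<Rightarrow> 'a) \<Rightarrow> bool" where
  "derivation D \<longleftrightarrow> (\<forall>x y. D (x + y) = D x + D y) \<and> (\<forall>x y. D (x * y) = x * D y + D x * y)"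

definition diff_subfield :: "('a::field \<Rightarrow> 'a) \<Rightarrow> 'a set \<Rightarrow> bool" where
  "diff_subfield D K \<longleftrightarrow> 0 \<in> K \<and> 1 \<in> K \<and>
     (\<forall>x\<in>K. \<forall>y\<in>K. x + y \<in> K \<and> x * y \<in> K) \<and>
     (\<forall>x\<in>K. - x \<in> K \<and> inverse x \<in> K \<and> D x \<in> K)"

text \<open>Differential polynomials in one differential indeterminate Y: ordinary polynomials
  in the variables Y, Y', Y'', ...; variable i stands for Y^(i).\<close>
type_synonym 'a dpoly = "(nat \<Rightarrow>\<^sub>0 nat) \<Rightarrow>\<^sub>0 'a"

definition mono_eval :: "('a::field \<Rightarrow> 'a) \<Rightarrow> (nat \<Rightarrow>\<^sub>0 nat) \<Rightarrow> 'a \<Rightarrow> 'a" where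
  "mono_eval D mon y = (\<Prod>i\<in>Poly_Mapping.keys mon. ((D ^^ i) y) ^ (Poly_Mapping.lookup mon i))"

definition dpoly_eval :: "('a::field \<Rightarrow> 'a) \<Rightarrow> 'a dpoly \<Rightarrow> 'a \<Rightarrow> 'a" where
  "dpoly_eval D P y = (\<Sum>mon\<in>Poly_Mapping.keys P. Poly_Mapping.lookup P mon * mono_eval D mon y)"

definition dpoly_coeffs_in :: "'a::zero set \<Rightarrow> 'a dpoly \<Rightarrow> bool" where
  "dpoly_coeffs_in K P \<longleftrightarrow> (\<forall>m\<in>Poly_Mapping.keys P. Poly_Mapping.lookup P m \<in> K)"

definition dpoly_order_le :: "nat \<Rightarrow> 'a::zero dpoly \<Rightarrow> bool" where
  "dpoly_order_le r P \<longleftrightarrow> (\<forall>m\<in>Poly_Mapping.keys P. \<forall>i\<in>Poly_Mapping.keys m. i \<le> r)"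

text \<open>K is weakly r-differentially closed in L (L = the whole type).\<close>
definition weakly_r_diff_closed :: "('a::field \<Rightarrow> 'a) \<Rightarrow> nat \<Rightarrow> 'a set \<Rightarrow> bool" where
  "weakly_r_diff_closed D r K \<longleftrightarrow>
     (\<forall>P. P \<noteq> 0 \<and> dpoly_coeffs_in K P \<and> dpoly_order_le r P \<and> (\<exists>y. dpoly_eval D P y = 0)
          \<longrightarrow> (\<exists>y\<in>K. dpoly_eval D P y = 0))"

definition alg_closed_subfield :: "'a::field set \<Rightarrow> bool" where
  "alg_closed_subfield K \<longleftrightarrow>
     (\<forall>p. (\<forall>i. coeff p i \<in> K) \<and> degree p \<ge> 1 \<longrightarrow> (\<exists>x\<in>K. poly p x = 0))"

end

theory Submission
  imports Defs
begin

text \<open>Let p be a polynomial over K without roots in K, of degree d. The binary form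
  h(u, v) = \<open>\<Sum>\<^sub>i\<close> coeff p i * u^i * v^(d-i) vanishes on K \<times> K only at (0, 0).
  Substituting differential polynomials for u and v and iterating, the Q_j combine into a single
  differential polynomial of order \<le> r with coefficients in K whose zeros in K are exactly the
  common zeros of the Q_j in K, and which vanishes at the given common zero in L. If it is nonzero,
  weak r-differential closedness gives a zero in K; if it is the zero polynomial, every element of
  K is a common zero.\<close>

lemma mono_eval_superset:
  assumes "finite S" "Poly_Mapping.keys mon \<subseteq> S"
  shows "mono_eval D mon y = (\<Prod>i\<in>S. ((D ^^ i) y) ^ Poly_Mapping.lookup mon i)"
  unfolding mono_eval_def
  by (rule prod.mono_neutral_left) (use assms in \<open>auto simp: in_keys_iff\<close>)

lemma mono_eval_zero [simp]: "mono_eval D 0 y = 1"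
  by (simp add: mono_eval_def)

lemma mono_eval_add: "mono_eval D (m1 + m2) y = mono_eval D m1 y * mono_eval D m2 y"
proof -
  let ?S = "Poly_Mapping.keys m1 \<union> Poly_Mapping.keys m2"
  have S: "finite ?S" by simp
  have "mono_eval D (m1 + m2) y = (\<Prod>i\<in>?S. ((D ^^ i) y) ^ Poly_Mapping.lookup (m1 + m2) i)"
    by (rule mono_eval_superset[OF S]) (simp add: keys_add)
  also have "\<dots> = (\<Prod>i\<in>?S. ((D ^^ i) y) ^ Poly_Mapping.lookup m1 i * ((D ^^ i) y) ^ Poly_Mapping.lookup m2 i)"
    by (simp add: lookup_add power_add)
  also have "\<dots> = mono_eval D m1 y * mono_eval D m2 y"
    by (simp add: prod.distrib mono_eval_superset[OF S])
  finally show ?thesis .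
qed

lemma dpoly_eval_superset:
  assumes "finite S" "Poly_Mapping.keys P \<subseteq> S"
  shows "dpoly_eval D P y = (\<Sum>k\<in>S. Poly_Mapping.lookup P k * mono_eval D k y)"
  unfolding dpoly_eval_def
  by (rule sum.mono_neutral_left) (use assms in \<open>auto simp: in_keys_iff\<close>)

lemma dpoly_eval_zero [simp]: "dpoly_eval D 0 y = 0"
  by (simp add: dpoly_eval_def)

lemma dpoly_eval_add: "dpoly_eval D (P + Q) y = dpoly_eval D P y + dpoly_eval D Q y"
  by (simp add: dpoly_eval_superset[of "Poly_Mapping.keys P \<union> Poly_Mapping.keys Q"]
      keys_add lookup_add distrib_right sum.distrib)

lemma dpoly_eval_single: "dpoly_eval D (Poly_Mapping.single k a) y = a * mono_eval D k y"
  by (simp add: dpoly_eval_superset[of "{k}"])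

lemma dpoly_eval_sum: "dpoly_eval D (sum f I) y = (\<Sum>i\<in>I. dpoly_eval D (f i) y)"
  by (induction I rule: infinite_finite_induct) (auto simp: dpoly_eval_add)

lemma poly_mapping_sum_single:
  assumes "finite S" "Poly_Mapping.keys P \<subseteq> S"
  shows "P = (\<Sum>k\<in>S. Poly_Mapping.single k (Poly_Mapping.lookup P k))"
proof (rule poly_mapping_eqI)
  fix j
  have "Poly_Mapping.lookup (\<Sum>k\<in>S. Poly_Mapping.single k (Poly_Mapping.lookup P k)) j
       = (\<Sum>k\<in>S. Poly_Mapping.lookup P k when k = j)"
    by (simp add: lookup_sum lookup_single)
  also have "\<dots> = Poly_Mapping.lookup P j"
    using assms by (auto simp: when_def in_keys_iff)
  finally show "Poly_Mapping.lookup P j =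
      Poly_Mapping.lookup (\<Sum>k\<in>S. Poly_Mapping.single k (Poly_Mapping.lookup P k)) j"
    by simp
qed

lemma poly_mapping_mult_expansion:
  "P * Q = (\<Sum>k\<in>Poly_Mapping.keys P. \<Sum>l\<in>Poly_Mapping.keys Q.
      Poly_Mapping.single (k + l) (Poly_Mapping.lookup P k * Poly_Mapping.lookup Q l))"
proof -
  have "P * Q = (\<Sum>k\<in>Poly_Mapping.keys P. Poly_Mapping.single k (Poly_Mapping.lookup P k)) *
      (\<Sum>l\<in>Poly_Mapping.keys Q. Poly_Mapping.single l (Poly_Mapping.lookup Q l))"
    by (metis poly_mapping_sum_single finite_keys order_refl)
  then show ?thesis
    by (simp add: sum_product mult_single)
qed

lemma dpoly_eval_mult: "dpoly_eval D (P * Q) y = dpoly_eval D P y * dpoly_eval D Q y"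
proof -
  have "dpoly_eval D (P * Q) y = (\<Sum>k\<in>Poly_Mapping.keys P. \<Sum>l\<in>Poly_Mapping.keys Q.
      (Poly_Mapping.lookup P k * mono_eval D k y) * (Poly_Mapping.lookup Q l * mono_eval D l y))"
    by (simp only: poly_mapping_mult_expansion dpoly_eval_sum dpoly_eval_single mono_eval_add mult_ac)
  also have "\<dots> = dpoly_eval D P y * dpoly_eval D Q y"
    by (simp add: dpoly_eval_def sum_product)
  finally show ?thesis .
qed

lemma dpoly_eval_one [simp]: "dpoly_eval D 1 y = 1"
  by (metis dpoly_eval_single mono_eval_zero mult_1 single_one)

lemma dpoly_eval_power: "dpoly_eval D (P ^ n) y = dpoly_eval D P y ^ n"
  by (induction n) (simp_all add: dpoly_eval_mult)

lemma dpoly_order_le_0 [simp]: "dpoly_order_le r 0"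
  and dpoly_order_le_1 [simp]: "dpoly_order_le r 1"
  by (simp_all add: dpoly_order_le_def)

lemma dpoly_order_le_add:
  "dpoly_order_le r P \<Longrightarrow> dpoly_order_le r Q \<Longrightarrow> dpoly_order_le r (P + Q)"
  unfolding dpoly_order_le_def using keys_add[of P Q] by blast

lemma dpoly_order_le_sum:
  "(\<And>i. i \<in> I \<Longrightarrow> dpoly_order_le r (f i)) \<Longrightarrow> dpoly_order_le r (sum f I)"
  by (induction I rule: infinite_finite_induct) (simp_all add: dpoly_order_le_add)

lemma dpoly_order_le_mult:
  assumes "dpoly_order_le r P" "dpoly_order_le r Q"
  shows "dpoly_order_le r (P * Q)"
  unfolding dpoly_order_le_def
proof (intro ballI)
  fix m i assume "m \<in> Poly_Mapping.keys (P * Q)" "i \<in> Poly_Mapping.keys m"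
  then obtain a b where ab: "m = a + b" "a \<in> Poly_Mapping.keys P" "b \<in> Poly_Mapping.keys Q"
    using keys_mult[of P Q] by blast
  then have "i \<in> Poly_Mapping.keys a \<union> Poly_Mapping.keys b"
    using \<open>i \<in> Poly_Mapping.keys m\<close> keys_add[of a b] by blast
  with assms ab show "i \<le> r" unfolding dpoly_order_le_def by blast
qed

lemma dpoly_order_le_power: "dpoly_order_le r P \<Longrightarrow> dpoly_order_le r (P ^ n)"
  by (induction n) (simp_all add: dpoly_order_le_mult)

lemma dpoly_order_le_single_0: "dpoly_order_le r (Poly_Mapping.single 0 c)"
  by (simp add: dpoly_order_le_def)

context
  fixes D :: "'a::field \<Rightarrow> 'a" and K :: "'a set"
  assumes K: "diff_subfield D K"
begin

lemma K_0: "0 \<in> K" and K_1: "1 \<in> K"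
  and K_add: "x \<in> K \<Longrightarrow> y \<in> K \<Longrightarrow> x + y \<in> K"
  and K_mult: "x \<in> K \<Longrightarrow> y \<in> K \<Longrightarrow> x * y \<in> K"
  and K_inverse: "x \<in> K \<Longrightarrow> inverse x \<in> K"
  and K_derivative: "x \<in> K \<Longrightarrow> D x \<in> K"
  using K by (auto simp: diff_subfield_def)

lemma K_sum: "(\<And>i. i \<in> I \<Longrightarrow> f i \<in> K) \<Longrightarrow> sum f I \<in> K"
  by (induction I rule: infinite_finite_induct) (simp_all add: K_0 K_add)

lemma K_prod: "(\<And>i. i \<in> I \<Longrightarrow> f i \<in> K) \<Longrightarrow> prod f I \<in> K"
  by (induction I rule: infinite_finite_induct) (simp_all add: K_1 K_mult)

lemma K_power: "x \<in> K \<Longrightarrow> x ^ n \<in> K"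
  by (induction n) (simp_all add: K_1 K_mult)

lemma K_divide: "x \<in> K \<Longrightarrow> y \<in> K \<Longrightarrow> x / y \<in> K"
  by (simp add: divide_inverse K_mult K_inverse)

lemma K_funpow_derivative: "x \<in> K \<Longrightarrow> (D ^^ n) x \<in> K"
  by (induction n) (simp_all add: K_derivative)

lemma dpoly_eval_in_K: "y \<in> K \<Longrightarrow> dpoly_coeffs_in K P \<Longrightarrow> dpoly_eval D P y \<in> K"
  unfolding dpoly_eval_def dpoly_coeffs_in_def mono_eval_def
  by (intro K_sum K_mult K_prod K_power K_funpow_derivative) auto

lemma dpoly_coeffs_in_iff: "dpoly_coeffs_in K P \<longleftrightarrow> (\<forall>m. Poly_Mapping.lookup P m \<in> K)"
  using K_0 by (auto simp: dpoly_coeffs_in_def in_keys_iff)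

lemma dpoly_coeffs_in_sum:
  "(\<And>i. i \<in> I \<Longrightarrow> dpoly_coeffs_in K (f i)) \<Longrightarrow> dpoly_coeffs_in K (sum f I)"
  by (simp add: dpoly_coeffs_in_iff lookup_sum K_sum)

lemma dpoly_coeffs_in_single: "c \<in> K \<Longrightarrow> dpoly_coeffs_in K (Poly_Mapping.single k c)"
  by (simp add: dpoly_coeffs_in_def)

lemma dpoly_coeffs_in_mult:
  "dpoly_coeffs_in K P \<Longrightarrow> dpoly_coeffs_in K Q \<Longrightarrow> dpoly_coeffs_in K (P * Q)"
  unfolding poly_mapping_mult_expansion[of P Q]
  by (intro dpoly_coeffs_in_sum dpoly_coeffs_in_single K_mult) (auto simp: dpoly_coeffs_in_iff)

lemma dpoly_coeffs_in_power: "dpoly_coeffs_in K P \<Longrightarrow> dpoly_coeffs_in K (P ^ n)"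
  by (induction n) (simp_all add: dpoly_coeffs_in_mult, metis dpoly_coeffs_in_single K_1 single_one)

end

definition homogenize :: "'a::comm_semiring_1 poly \<Rightarrow> 'a \<Rightarrow> 'a \<Rightarrow> 'a" where
  "homogenize p u v = (\<Sum>i\<le>degree p. coeff p i * u ^ i * v ^ (degree p - i))"

lemma homogenize_0_0: "degree p \<ge> 1 \<Longrightarrow> homogenize p 0 0 = 0"
  unfolding homogenize_def by (intro sum.neutral ballI) (simp add: power_0_left)

lemma homogenize_right_0: "homogenize p u 0 = lead_coeff p * u ^ degree p"
  unfolding homogenize_def by (subst sum.remove[of _ "degree p"]) (auto simp: power_0_left intro!: sum.neutral)

lemma homogenize_nonzero_right:
  fixes p :: "'a::field poly"
  assumes "v \<noteq> 0"
  shows "homogenize p u v = v ^ degree p * poly p (u / v)"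
proof -
  have "coeff p i * u ^ i * v ^ (degree p - i) = v ^ degree p * (coeff p i * (u / v) ^ i)"
    if "i \<le> degree p" for i
  proof -
    have "v ^ degree p = v ^ i * v ^ (degree p - i)"
      using that by (simp add: power_add[symmetric])
    then show ?thesis using assms by (simp add: power_divide field_simps)
  qed
  then have "homogenize p u v = (\<Sum>i\<le>degree p. v ^ degree p * (coeff p i * (u / v) ^ i))"
    unfolding homogenize_def by (intro sum.cong) simp_all
  then show ?thesis
    by (simp add: poly_altdef sum_distrib_left)
qed

lemma homogenize_anisotropic:
  fixes p :: "'a::field poly"
  assumes K: "diff_subfield D K" and rootless: "\<forall>x\<in>K. poly p x \<noteq> 0"
    and "u \<in> K" "v \<in> K" "homogenize p u v = 0"
  shows "u = 0 \<and> v = 0"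
proof (cases "v = 0")
  case True
  have "p \<noteq> 0" using rootless K_0[OF K] by auto
  then show ?thesis using assms(5) True by (simp add: homogenize_right_0)
next
  case False
  then have "poly p (u / v) = 0" using assms(5) by (simp add: homogenize_nonzero_right)
  then show ?thesis using rootless K_divide[OF K \<open>u \<in> K\<close> \<open>v \<in> K\<close>] by blast
qed

definition dpoly_homogenize :: "'a::field poly \<Rightarrow> 'a dpoly \<Rightarrow> 'a dpoly \<Rightarrow> 'a dpoly" where
  "dpoly_homogenize p a b =
    (\<Sum>i\<le>degree p. Poly_Mapping.single 0 (coeff p i) * a ^ i * b ^ (degree p - i))"

lemma dpoly_eval_homogenize:
  "dpoly_eval D (dpoly_homogenize p a b) y = homogenize p (dpoly_eval D a y) (dpoly_eval D b y)"
  by (simp add: dpoly_homogenize_def homogenize_def dpoly_eval_sum dpoly_eval_mult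
      dpoly_eval_power dpoly_eval_single)

primrec dpoly_combine :: "'a::field poly \<Rightarrow> (nat \<Rightarrow> 'a dpoly) \<Rightarrow> nat \<Rightarrow> 'a dpoly" where
  "dpoly_combine p Q 0 = Q 0"
| "dpoly_combine p Q (Suc n) = dpoly_homogenize p (dpoly_combine p Q n) (Q (Suc n))"

lemma dpoly_combine_coeffs_in:
  assumes K: "diff_subfield D K" and "\<forall>i. coeff p i \<in> K" "\<forall>j\<le>n. dpoly_coeffs_in K (Q j)"
  shows "dpoly_coeffs_in K (dpoly_combine p Q n)"
  using assms(3)
  by (induction n) (simp_all add: dpoly_homogenize_def assms(2)
      dpoly_coeffs_in_sum[OF K] dpoly_coeffs_in_mult[OF K] dpoly_coeffs_in_power[OF K]
      dpoly_coeffs_in_single[OF K])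

lemma dpoly_combine_order_le:
  "\<forall>j\<le>n. dpoly_order_le r (Q j) \<Longrightarrow> dpoly_order_le r (dpoly_combine p Q n)"
  by (induction n) (simp_all add: dpoly_homogenize_def dpoly_order_le_sum dpoly_order_le_mult
      dpoly_order_le_power dpoly_order_le_single_0)

lemma dpoly_combine_common_zero:
  assumes "degree p \<ge> 1" "\<forall>j\<le>n. dpoly_eval D (Q j) y = 0"
  shows "dpoly_eval D (dpoly_combine p Q n) y = 0"
  using assms(2)
  by (induction n) (simp_all add: dpoly_eval_homogenize homogenize_0_0[OF assms(1)])

lemma dpoly_combine_zero_in_K:
  assumes K: "diff_subfield D K" and "\<forall>i. coeff p i \<in> K" "\<forall>x\<in>K. poly p x \<noteq> 0"
    and "\<forall>j\<le>n. dpoly_coeffs_in K (Q j)" "y \<in> K" "dpoly_eval D (dpoly_combine p Q n) y = 0"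
  shows "\<forall>j\<le>n. dpoly_eval D (Q j) y = 0"
  using assms(4,6)
proof (induction n)
  case (Suc n)
  have "dpoly_eval D (dpoly_combine p Q n) y = 0 \<and> dpoly_eval D (Q (Suc n)) y = 0"
    using Suc.prems
    by (intro homogenize_anisotropic[OF K assms(3)] dpoly_eval_in_K[OF K \<open>y \<in> K\<close>]
        dpoly_combine_coeffs_in[OF K assms(2)]) (simp_all add: dpoly_eval_homogenize)
  with Suc show ?case by (auto simp: le_Suc_eq)
qed simp

theorem mainTheorem18:
  fixes D :: "'a::field_char_0 \<Rightarrow> 'a" and K :: "'a set" and r m :: nat
    and Q :: "nat \<Rightarrow> 'a dpoly"
  assumes "derivation D"
    and "diff_subfield D K"
    and "\<not> alg_closed_subfield K"
    and "\<exists>x\<in>K. D x \<noteq> 0"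
    and "weakly_r_diff_closed D r K"
    and "m \<ge> 1"
    and "\<forall>j<m. Q j \<noteq> 0 \<and> dpoly_coeffs_in K (Q j) \<and> dpoly_order_le r (Q j)"
    and "\<exists>y. \<forall>j<m. dpoly_eval D (Q j) y = 0"
  shows "\<exists>y\<in>K. \<forall>j<m. dpoly_eval D (Q j) y = 0"
proof -
  obtain p :: "'a poly" where p: "\<forall>i. coeff p i \<in> K" "degree p \<ge> 1" "\<forall>x\<in>K. poly p x \<noteq> 0"
    using assms(3) unfolding alg_closed_subfield_def by blast
  obtain n where m: "m = Suc n" using assms(6) by (cases m) auto
  obtain y0 where y0: "\<forall>j\<le>n. dpoly_eval D (Q j) y0 = 0"
    using assms(8) m by (auto simp: less_Suc_eq_le)
  have Q: "\<forall>j\<le>n. dpoly_coeffs_in K (Q j) \<and> dpoly_order_le r (Q j)"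
    using assms(7) m by (auto simp: less_Suc_eq_le)
  define P where "P = dpoly_combine p Q n"
  have "\<exists>y\<in>K. dpoly_eval D P y = 0"
  proof (cases "P = 0")
    case True
    then show ?thesis using K_0[OF assms(2)] by auto
  next
    case False
    moreover have "dpoly_eval D P y0 = 0"
      unfolding P_def using dpoly_combine_common_zero[OF p(2) y0] .
    ultimately show ?thesis
      using assms(5) Q dpoly_combine_coeffs_in[OF assms(2) p(1)] dpoly_combine_order_le
      unfolding weakly_r_diff_closed_def P_def by blast
  qed
  then obtain y where y: "y \<in> K" "dpoly_eval D P y = 0" by blast
  then have "\<forall>j\<le>n. dpoly_eval D (Q j) y = 0"
    using dpoly_combine_zero_in_K[OF assms(2) p(1,3)] Q unfolding P_def by blast
  then show ?thesis using y(1) m by (auto simp: less_Suc_eq_le)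
qed

end
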